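(* In the two-shock setting ($v_\pm>0$, $u_->u_+$, intermediate state $(u_*^{\epsilon_1\epsilon_2},v_*^{\epsilon_1\epsilon_2})$, shock speeds $\sigma_1^{\epsilon_1\epsilon_2},\sigma_2^{\epsilon_1\epsilon_2}$), $$\lim_{\epsilon_1,\epsilon_2\to0}u_*^{\epsilon_1\epsilon_2}=\lim_{\epsilon_1,\epsilon_2\to0}\sigma_1^{\epsilon_1\epsilon_2}=\lim_{\epsilon_1,\epsilon_2\to0}\sigma_2^{\epsilon_1\epsilon_2}=\frac{u_-+u_+}{2}.$$
   Context: Perturbed Brio system: $u_t+(\tfrac12u^2+\tfrac12\epsilon_1v^2)_x=0$, $v_t+(uv-\epsilon_2v)_x=0$, $\epsilon_1,\epsilon_2>0$, $v>0$, with Riemann data $(u_-,v_-)$ for $x<0$, $(u_+,v_+)$ for $x>0$. A two-shock Riemann solution is one with an intermediate state $(u_*,v_* )$, $v_*>\max(v_-,v_+)$, $u_+<u_*<u_-$, such that $$u_*=u_-+(v_*-v_-)\frac{\epsilon_2-\sqrt{\epsilon_2^2+4\epsilon_1(v_*+v_-)^2}}{v_*+v_-},\qquad u_+=u_*+(v_+-v_* )\frac{\epsilon_2+\sqrt{\epsilon_2^2+4\epsilon_1(v_*+v_+)^2}}{v_*+v_+},$$ with shock speeds $\sigma_1=u_-+\frac{v_*(u_*-u_-)}{v_*-v_-}-\epsilon_2$ and $\sigma_2=u_++\frac{v_*(u_+-u_* )}{v_+-v_*}-\epsilon_2$. The limit is taken over parameters for which this solution exists. *)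

theory Defs
  imports Complex_Main
begin

text \<open>Two-shock Riemann solution of the perturbed Brio system with parameters e1, e2,
  left state (um, vm), right state (up, vp), intermediate state (us, vs).\<close>
definition two_shock ::
  "real \<Rightarrow> real \<Rightarrow> real \<Rightarrow> real \<Rightarrow> real \<Rightarrow> real \<Rightarrow> real \<Rightarrow> real \<Rightarrow> bool" where
  "two_shock e1 e2 um vm up vp us vs \<longleftrightarrow>
     vs > max vm vp \<and> up < us \<and> us < um \<and>
     us = um + (vs - vm) * ((e2 - sqrt (e2^2 + 4 * e1 * (vs + vm)^2)) / (vs + vm)) \<and>
     up = us + (vp - vs) * ((e2 + sqrt (e2^2 + 4 * e1 * (vs + vp)^2)) / (vs + vp))"

definition sigma1 :: "real \<Rightarrow> real \<Rightarrow> real \<Rightarrow> real \<Rightarrow> real \<Rightarrow> real" where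
  "sigma1 e2 um vm us vs = um + vs * (us - um) / (vs - vm) - e2"

definition sigma2 :: "real \<Rightarrow> real \<Rightarrow> real \<Rightarrow> real \<Rightarrow> real \<Rightarrow> real" where
  "sigma2 e2 up vp us vs = up + vs * (up - us) / (vp - vs) - e2"

end

theory Submission
  imports Defs
begin

text \<open>Put \<open>T = 2 * sqrt e1\<close>. Every square root in the shock curves satisfies
  \<open>c * T \<le> sqrt (e2\<^sup>2 + 4 * e1 * c\<^sup>2) \<le> e2 + c * T\<close>, so the slopes
  \<open>k1 = (us - um) / (vs - vm)\<close> and \<open>k2 = (up - us) / (vp - vs)\<close> are \<open>-T\<close> and \<open>T\<close>
  up to errors that stay below \<open>2 * e2\<close> after multiplication by any weight between \<open>0\<close>
  and the corresponding sum of \<open>v\<close>'s. Now \<open>sigma1 - us = vm * k1 - e2\<close>,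
  \<open>sigma2 - us = vp * k2 - e2\<close> and \<open>2 * us - um - up = (vs - vm) * k1 + (vs - vp) * k2\<close>, in
  which the terms \<open>vs * T\<close> cancel. Hence all three deviations are \<open>O(sqrt e1 + e2)\<close>
  uniformly in the intermediate state \<open>vs\<close>, which itself grows like \<open>1 / sqrt e1\<close>.\<close>

lemma sqrt_sq_add_four_mult_sq_bounds:
  fixes e1 e2 c :: real
  assumes "0 \<le> e1" "0 \<le> e2" "0 \<le> c"
  shows "2 * sqrt e1 * c \<le> sqrt (e2^2 + 4 * e1 * c^2)"
    and "sqrt (e2^2 + 4 * e1 * c^2) \<le> e2 + 2 * sqrt e1 * c"
proof -
  have sq: "4 * e1 * c^2 = (2 * sqrt e1 * c)^2"
    using assms by (simp add: power_mult_distrib)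
  show "2 * sqrt e1 * c \<le> sqrt (e2^2 + 4 * e1 * c^2)"
    unfolding sq by (rule real_sqrt_sum_squares_ge2)
  have "sqrt (e2^2 + (2 * sqrt e1 * c)^2) \<le> sqrt (e2^2) + sqrt ((2 * sqrt e1 * c)^2)"
    by (rule sqrt_add_le_add_sqrt) simp_all
  then show "sqrt (e2^2 + 4 * e1 * c^2) \<le> e2 + 2 * sqrt e1 * c"
    unfolding sq using assms by simp
qed

lemma weighted_slope_bounds:
  fixes c w e2 T S :: real
  assumes "0 < c" "0 \<le> w" "w \<le> c" "0 \<le> e2" "c * T \<le> S" "S \<le> e2 + c * T"
  shows "- (w * T) \<le> w * ((e2 - S) / c)" and "w * ((e2 - S) / c) \<le> e2 - w * T"
    and "w * T \<le> w * ((e2 + S) / c)" and "w * ((e2 + S) / c) \<le> 2 * e2 + w * T"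
proof -
  have "w * (- (c * T)) \<le> w * (e2 - S)" "w * (e2 - S) \<le> w * (e2 - c * T)"
    "w * (c * T) \<le> w * (e2 + S)" "w * (e2 + S) \<le> w * (2 * e2 + c * T)"
    "w * e2 \<le> c * e2"
    using assms by (intro mult_left_mono mult_right_mono; linarith)+
  then show "- (w * T) \<le> w * ((e2 - S) / c)" "w * ((e2 - S) / c) \<le> e2 - w * T"
    "w * T \<le> w * ((e2 + S) / c)" "w * ((e2 + S) / c) \<le> 2 * e2 + w * T"
    using assms by (simp_all add: field_simps)
qed

lemma two_shock_estimates:
  fixes e1 e2 um vm up vp us vs :: real
  assumes "0 < e1" "0 < e2" "0 < vm" "0 < vp"
    and shock: "two_shock e1 e2 um vm up vp us vs"
  shows "\<bar>us - (um + up) / 2\<bar> \<le> (vm + vp) * sqrt e1 + 3 * e2 / 2"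
    and "\<bar>sigma1 e2 um vm us vs - us\<bar> \<le> 2 * vm * sqrt e1 + e2"
    and "\<bar>sigma2 e2 up vp us vs - us\<bar> \<le> 2 * vp * sqrt e1 + e2"
proof -
  define T where "T = 2 * sqrt e1"
  define S1 where "S1 = sqrt (e2^2 + 4 * e1 * (vs + vm)^2)"
  define S2 where "S2 = sqrt (e2^2 + 4 * e1 * (vs + vp)^2)"
  define k1 where "k1 = (e2 - S1) / (vs + vm)"
  define k2 where "k2 = (e2 + S2) / (vs + vp)"
  have vs_gt: "vm < vs" "vp < vs"
    and us_jump: "us - um = (vs - vm) * k1" and up_jump: "up - us = (vp - vs) * k2"
    using shock by (auto simp: two_shock_def k1_def k2_def S1_def S2_def)
  have sigma1_eq: "sigma1 e2 um vm us vs - us = vm * k1 - e2"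
  proof -
    have speed_term: "vs * (us - um) / (vs - vm) = vs * k1"
      unfolding us_jump using vs_gt by simp
    show ?thesis
      unfolding sigma1_def speed_term using us_jump by (simp add: algebra_simps)
  qed
  have sigma2_eq: "sigma2 e2 up vp us vs - us = vp * k2 - e2"
  proof -
    have speed_term: "vs * (up - us) / (vp - vs) = vs * k2"
      unfolding up_jump using vs_gt by simp
    show ?thesis
      unfolding sigma2_def speed_term using up_jump by (simp add: algebra_simps)
  qed
  have S1_bounds: "(vs + vm) * T \<le> S1" "S1 \<le> e2 + (vs + vm) * T"
    using sqrt_sq_add_four_mult_sq_bounds[of e1 e2 "vs + vm"] assms vs_gt
    by (simp_all add: S1_def T_def mult.commute)
  have S2_bounds: "(vs + vp) * T \<le> S2" "S2 \<le> e2 + (vs + vp) * T"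
    using sqrt_sq_add_four_mult_sq_bounds[of e1 e2 "vs + vp"] assms vs_gt
    by (simp_all add: S2_def T_def mult.commute)
  note k1_bounds = weighted_slope_bounds(1,2)[of "vs + vm" _ e2 T S1, folded k1_def]
  note k2_bounds = weighted_slope_bounds(3,4)[of "vs + vp" _ e2 T S2, folded k2_def]
  have vm_k1: "- (vm * T) \<le> vm * k1" "vm * k1 \<le> e2 - vm * T"
    and gap_k1: "- ((vs - vm) * T) \<le> (vs - vm) * k1" "(vs - vm) * k1 \<le> e2 - (vs - vm) * T"
    using k1_bounds S1_bounds assms vs_gt by simp_all
  have vp_k2: "vp * T \<le> vp * k2" "vp * k2 \<le> 2 * e2 + vp * T"
    and gap_k2: "(vs - vp) * T \<le> (vs - vp) * k2" "(vs - vp) * k2 \<le> 2 * e2 + (vs - vp) * T"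
    using k2_bounds S2_bounds assms vs_gt by simp_all
  have T_nonneg: "0 \<le> vm * T" "0 \<le> vp * T"
    using assms by (simp_all add: T_def)
  have "2 * us - (um + up) \<le> vm * T + vp * T + 3 * e2"
    and "um + up - 2 * us \<le> vm * T + vp * T + 3 * e2"
    using us_jump up_jump gap_k1 gap_k2 T_nonneg
    unfolding left_diff_distrib right_diff_distrib by linarith+
  then show "\<bar>us - (um + up) / 2\<bar> \<le> (vm + vp) * sqrt e1 + 3 * e2 / 2"
    unfolding T_def distrib_right mult.left_commute[of _ 2] add_divide_distrib abs_le_iff
    by (intro conjI) linarith+
  show "\<bar>sigma1 e2 um vm us vs - us\<bar> \<le> 2 * vm * sqrt e1 + e2"
    using sigma1_eq vm_k1 T_nonneg by (simp add: T_def)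
  show "\<bar>sigma2 e2 up vp us vs - us\<bar> \<le> 2 * vp * sqrt e1 + e2"
    using sigma2_eq vp_k2 T_nonneg by (simp add: T_def)
qed

theorem lemma5p3:
  fixes um vm up vp :: real
  assumes "vm > 0" and "vp > 0" and "um > up"
  shows "\<forall>\<epsilon>>0. \<exists>\<delta>>0. \<forall>e1 e2 us vs.
           0 < e1 \<and> e1 < \<delta> \<and> 0 < e2 \<and> e2 < \<delta> \<and> two_shock e1 e2 um vm up vp us vs \<longrightarrow>
             \<bar>us - (um + up) / 2\<bar> < \<epsilon> \<and>
             \<bar>sigma1 e2 um vm us vs - (um + up) / 2\<bar> < \<epsilon> \<and>
             \<bar>sigma2 e2 up vp us vs - (um + up) / 2\<bar> < \<epsilon>"
proof (intro allI impI)
  fix \<epsilon> :: real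
  assume "0 < \<epsilon>"
  define \<delta> where "\<delta> = min (\<epsilon> / 6) ((\<epsilon> / (12 * (vm + vp)))^2)"
  show "\<exists>\<delta>>0. \<forall>e1 e2 us vs.
           0 < e1 \<and> e1 < \<delta> \<and> 0 < e2 \<and> e2 < \<delta> \<and> two_shock e1 e2 um vm up vp us vs \<longrightarrow>
             \<bar>us - (um + up) / 2\<bar> < \<epsilon> \<and>
             \<bar>sigma1 e2 um vm us vs - (um + up) / 2\<bar> < \<epsilon> \<and>
             \<bar>sigma2 e2 up vp us vs - (um + up) / 2\<bar> < \<epsilon>"
  proof (intro exI[of _ \<delta>] conjI allI impI)
    show "0 < \<delta>"
      using \<open>0 < \<epsilon>\<close> assms by (simp add: \<delta>_def)
    fix e1 e2 us vs
    assume "0 < e1 \<and> e1 < \<delta> \<and> 0 < e2 \<and> e2 < \<delta> \<and> two_shock e1 e2 um vm up vp us vs"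
    then have e1: "0 < e1" "e1 < (\<epsilon> / (12 * (vm + vp)))^2" and e2: "0 < e2" "e2 < \<epsilon> / 6"
      and shock: "two_shock e1 e2 um vm up vp us vs"
      by (auto simp: \<delta>_def)
    have "sqrt e1 < \<epsilon> / (12 * (vm + vp))"
      using e1 \<open>0 < \<epsilon>\<close> assms by (intro real_less_lsqrt) simp_all
    then have "(vm + vp) * sqrt e1 < \<epsilon> / 12"
      using assms by (simp add: field_simps)
    moreover have "0 \<le> vm * sqrt e1" "0 \<le> vp * sqrt e1"
      using assms e1 by simp_all
    moreover note two_shock_estimates[OF e1(1) e2(1) assms(1,2) shock]
    ultimately show "\<bar>us - (um + up) / 2\<bar> < \<epsilon>"
      and "\<bar>sigma1 e2 um vm us vs - (um + up) / 2\<bar> < \<epsilon>"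
      and "\<bar>sigma2 e2 up vp us vs - (um + up) / 2\<bar> < \<epsilon>"
      using e2 unfolding distrib_right by linarith+
  qed
qed

end
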